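(* Let $(\mathcal C,S,T)$ be a unital association schemoid. (i) For every $\sigma\in S$ there exists a unique $\alpha\in S_0$ with $p^\sigma_{\sigma\alpha}=1$; moreover $p^\sigma_{\sigma\alpha'}=0$ for all $\alpha'\in S_0$ with $\alpha'\neq\alpha$. (ii) For every $\sigma\in S$ there exists a unique $\beta\in S_0$ with $p^\sigma_{\beta\sigma}=1$; moreover $p^\sigma_{\beta'\sigma}=0$ for all $\beta'\in S_0$ with $\beta'\neq\beta$.
   Context: Write $s(f),t(f)$ for source and target. A quasi-schemoid is a pair $(\mathcal C,S)$ with $\mathcal C$ a small category and $S$ a partition of $mor(\mathcal C)$ into nonempty blocks such that for all $\sigma,\tau,\mu\in S$ and $f,g\in\mu$ the sets $\{(a,b)\in\sigma\times\tau: s(a)=t(b), a\circ b=f\}$ and the analogous set for $g$ have equal cardinality, denoted $p^\mu_{\sigma\tau}$ (structure constant). An association schemoid is a triple $(\mathcal C,S,T)$ where $(\mathcal C,S)$ is a quasi-schemoid, every block of $S$ containing an endomorphism consists only of endomorphisms, and $T:\mathcal C\to\mathcal C$ is a contravariant functor with $T^2=\mathrm{id}$ and $\{T(f):f\in\sigma\}\in S$ for all $\sigma\in S$. With $J_0=\{1_x:x\in ob(\mathcal C)\}$, it is unital if every block meeting $J_0$ is contained in $J_0$. $S_0=\{\alpha\in S:\alpha\cap J_0\neq\emptyset\}$. *)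

theory Defs
  imports Main "HOL-Library.Equipollence" "HOL-Library.Disjoint_Sets" "HOL-Library.Extended_Nat"
begin

text \<open>A small category given explicitly by its object set, morphism set,
  source (Dom), target (Cod), identities and composition (Comp a b = a \<circ> b,
  defined when Dom a = Cod b).\<close>

record ('o, 'm) cat =
  Ob   :: "'o set"
  Mor  :: "'m set"
  Dom  :: "'m \<Rightarrow> 'o"
  Cod  :: "'m \<Rightarrow> 'o"
  Id   :: "'o \<Rightarrow> 'm"
  Comp :: "'m \<Rightarrow> 'm \<Rightarrow> 'm"

definition is_category :: "('o, 'm) cat \<Rightarrow> bool" where
  "is_category C \<longleftrightarrow>
     (\<forall>f\<in>Mor C. Dom C f \<in> Ob C \<and> Cod C f \<in> Ob C) \<and>
     (\<forall>x\<in>Ob C. Id C x \<in> Mor C \<and> Dom C (Id C x) = x \<and> Cod C (Id C x) = x) \<and>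
     (\<forall>f\<in>Mor C. \<forall>g\<in>Mor C. Dom C f = Cod C g \<longrightarrow>
         Comp C f g \<in> Mor C \<and> Dom C (Comp C f g) = Dom C g \<and> Cod C (Comp C f g) = Cod C f) \<and>
     (\<forall>f\<in>Mor C. \<forall>g\<in>Mor C. \<forall>h\<in>Mor C. Dom C f = Cod C g \<longrightarrow> Dom C g = Cod C h \<longrightarrow>
         Comp C (Comp C f g) h = Comp C f (Comp C g h)) \<and>
     (\<forall>f\<in>Mor C. Comp C f (Id C (Dom C f)) = f \<and> Comp C (Id C (Cod C f)) f = f)"

definition pset :: "('o, 'm) cat \<Rightarrow> 'm set \<Rightarrow> 'm set \<Rightarrow> 'm \<Rightarrow> ('m \<times> 'm) set" where
  "pset C \<sigma> \<tau> f = {(a, b). a \<in> \<sigma> \<and> b \<in> \<tau> \<and> Dom C a = Cod C b \<and> Comp C a b = f}"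

definition quasi_schemoid :: "('o, 'm) cat \<Rightarrow> 'm set set \<Rightarrow> bool" where
  "quasi_schemoid C S \<longleftrightarrow> is_category C \<and> partition_on (Mor C) S \<and>
     (\<forall>\<sigma>\<in>S. \<forall>\<tau>\<in>S. \<forall>\<mu>\<in>S. \<forall>f\<in>\<mu>. \<forall>g\<in>\<mu>. pset C \<sigma> \<tau> f \<approx> pset C \<sigma> \<tau> g)"

text \<open>Structure constant p^mu_{sigma tau}, as an extended natural number
  (infinite cardinalities are all recorded as infinity; irrelevant for values 0 and 1).\<close>

definition pconst :: "('o, 'm) cat \<Rightarrow> 'm set \<Rightarrow> 'm set \<Rightarrow> 'm set \<Rightarrow> enat" where
  "pconst C \<sigma> \<tau> \<mu> =
     (let A = pset C \<sigma> \<tau> (SOME f. f \<in> \<mu>) in if finite A then enat (card A) else \<infinity>)"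

definition contravariant_functor :: "('o, 'm) cat \<Rightarrow> ('o \<Rightarrow> 'o) \<Rightarrow> ('m \<Rightarrow> 'm) \<Rightarrow> bool" where
  "contravariant_functor C To Tm \<longleftrightarrow>
     (\<forall>x\<in>Ob C. To x \<in> Ob C) \<and>
     (\<forall>f\<in>Mor C. Tm f \<in> Mor C \<and> Dom C (Tm f) = To (Cod C f) \<and> Cod C (Tm f) = To (Dom C f)) \<and>
     (\<forall>x\<in>Ob C. Tm (Id C x) = Id C (To x)) \<and>
     (\<forall>f\<in>Mor C. \<forall>g\<in>Mor C. Dom C f = Cod C g \<longrightarrow> Tm (Comp C f g) = Comp C (Tm g) (Tm f))"

definition association_schemoid ::
  "('o, 'm) cat \<Rightarrow> 'm set set \<Rightarrow> ('o \<Rightarrow> 'o) \<Rightarrow> ('m \<Rightarrow> 'm) \<Rightarrow> bool" where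
  "association_schemoid C S To Tm \<longleftrightarrow>
     quasi_schemoid C S \<and>
     (\<forall>\<sigma>\<in>S. (\<exists>f\<in>\<sigma>. Dom C f = Cod C f) \<longrightarrow> (\<forall>f\<in>\<sigma>. Dom C f = Cod C f)) \<and>
     contravariant_functor C To Tm \<and>
     (\<forall>x\<in>Ob C. To (To x) = x) \<and> (\<forall>f\<in>Mor C. Tm (Tm f) = f) \<and>
     (\<forall>\<sigma>\<in>S. Tm ` \<sigma> \<in> S)"

definition J0 :: "('o, 'm) cat \<Rightarrow> 'm set" where
  "J0 C = Id C ` Ob C"

definition unital :: "('o, 'm) cat \<Rightarrow> 'm set set \<Rightarrow> bool" where
  "unital C S \<longleftrightarrow> (\<forall>\<sigma>\<in>S. \<sigma> \<inter> J0 C \<noteq> {} \<longrightarrow> \<sigma> \<subseteq> J0 C)"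

definition S0 :: "('o, 'm) cat \<Rightarrow> 'm set set \<Rightarrow> 'm set set" where
  "S0 C S = {\<alpha>\<in>S. \<alpha> \<inter> J0 C \<noteq> {}}"

end

theory Submission
  imports Defs
begin

(* Fix a block sigma and a representative f of sigma (the one that
   pconst evaluates at).  Every block alpha of S0 consists of identities, by
   unitality, and composing with an identity either returns f or is undefined.
   Hence the only factorisation of f through sigma x alpha is f = f o 1_{s(f)},
   so p^sigma_{sigma alpha} is 1 if 1_{s(f)} lies in alpha and 0 otherwise; dually
   p^sigma_{alpha sigma} is the indicator of 1_{t(f)} in alpha.  Since S is a
   partition, exactly one block of S0 contains a given identity, which yields
   existence, uniqueness and the vanishing of the other constants. *)

lemma pconst_indicator:
  assumes "pset C \<sigma> \<tau> (SOME f. f \<in> \<mu>) = (if P then {p} else {})"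
  shows "pconst C \<sigma> \<tau> \<mu> = (if P then 1 else 0)"
  using assms by (simp add: pconst_def one_enat_def zero_enat_def)

lemma pset_identities_right:
  assumes cat: "is_category C" and \<alpha>: "\<alpha> \<subseteq> J0 C"
    and \<sigma>: "\<sigma> \<subseteq> Mor C" and f: "f \<in> \<sigma>"
  shows "pset C \<sigma> \<alpha> f =
           (if Id C (Dom C f) \<in> \<alpha> then {(f, Id C (Dom C f))} else {})"
proof -
  have ids: "Id C x \<in> Mor C \<and> Dom C (Id C x) = x \<and> Cod C (Id C x) = x" if "x \<in> Ob C" for x
    using cat that unfolding is_category_def by blast
  have unit: "Comp C a (Id C (Dom C a)) = a" if "a \<in> Mor C" for a
    using cat that unfolding is_category_def by blast
  have "(a, b) \<in> pset C \<sigma> \<alpha> f \<longleftrightarrow> a = f \<and> b = Id C (Dom C f) \<and> Id C (Dom C f) \<in> \<alpha>"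
    for a b
  proof
    assume "(a, b) \<in> pset C \<sigma> \<alpha> f"
    then have a: "a \<in> Mor C" and b: "b \<in> \<alpha>" "Dom C a = Cod C b" "Comp C a b = f"
      using \<sigma> unfolding pset_def by auto
    then obtain x where "x \<in> Ob C" "b = Id C x"
      using \<alpha> unfolding J0_def by blast
    with a b ids unit show "a = f \<and> b = Id C (Dom C f) \<and> Id C (Dom C f) \<in> \<alpha>"
      by force
  next
    assume "a = f \<and> b = Id C (Dom C f) \<and> Id C (Dom C f) \<in> \<alpha>"
    with f \<sigma> cat show "(a, b) \<in> pset C \<sigma> \<alpha> f"
      unfolding pset_def is_category_def by auto
  qed
  then show ?thesis by auto
qed

lemma pset_identities_left:
  assumes cat: "is_category C" and \<beta>: "\<beta> \<subseteq> J0 C"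
    and \<sigma>: "\<sigma> \<subseteq> Mor C" and f: "f \<in> \<sigma>"
  shows "pset C \<beta> \<sigma> f =
           (if Id C (Cod C f) \<in> \<beta> then {(Id C (Cod C f), f)} else {})"
proof -
  have ids: "Id C x \<in> Mor C \<and> Dom C (Id C x) = x \<and> Cod C (Id C x) = x" if "x \<in> Ob C" for x
    using cat that unfolding is_category_def by blast
  have unit: "Comp C (Id C (Cod C b)) b = b" if "b \<in> Mor C" for b
    using cat that unfolding is_category_def by blast
  have "(a, b) \<in> pset C \<beta> \<sigma> f \<longleftrightarrow> a = Id C (Cod C f) \<and> b = f \<and> Id C (Cod C f) \<in> \<beta>"
    for a b
  proof
    assume "(a, b) \<in> pset C \<beta> \<sigma> f"
    then have b: "b \<in> Mor C" and a: "a \<in> \<beta>" "Dom C a = Cod C b" "Comp C a b = f"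
      using \<sigma> unfolding pset_def by auto
    then obtain x where "x \<in> Ob C" "a = Id C x"
      using \<beta> unfolding J0_def by blast
    with a b ids unit show "a = Id C (Cod C f) \<and> b = f \<and> Id C (Cod C f) \<in> \<beta>"
      by force
  next
    assume "a = Id C (Cod C f) \<and> b = f \<and> Id C (Cod C f) \<in> \<beta>"
    with f \<sigma> cat show "(a, b) \<in> pset C \<beta> \<sigma> f"
      unfolding pset_def is_category_def by auto
  qed
  then show ?thesis by auto
qed

lemma indicator_on_partition:
  fixes c :: "'a set \<Rightarrow> enat"
  assumes part: "partition_on A P" and Q: "Q \<subseteq> P"
    and q: "q \<in> Q" "x \<in> q"
    and c: "\<forall>\<alpha>\<in>Q. c \<alpha> = (if x \<in> \<alpha> then 1 else 0)"
  shows "(\<exists>!\<alpha>. \<alpha> \<in> Q \<and> c \<alpha> = 1) \<and>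
         (\<forall>\<alpha>\<in>Q. c \<alpha> = 1 \<longrightarrow> (\<forall>\<alpha>'\<in>Q. \<alpha>' \<noteq> \<alpha> \<longrightarrow> c \<alpha>' = 0))"
proof -
  have unique: "\<alpha> = q" if "\<alpha> \<in> Q" "x \<in> \<alpha>" for \<alpha>
    using part Q q that unfolding partition_on_def disjoint_def by blast
  have "c \<alpha> = 1 \<longleftrightarrow> \<alpha> = q" if "\<alpha> \<in> Q" for \<alpha>
    using c that unique[OF that] q by auto
  moreover have "c \<alpha> = 0" if "\<alpha> \<in> Q" "\<alpha> \<noteq> q" for \<alpha>
    using c that(1) unique[OF that(1)] that(2) by auto
  ultimately show ?thesis using q by blast
qed

lemma S0_identities:
  assumes "unital C S" "\<alpha> \<in> S0 C S"
  shows "\<alpha> \<subseteq> J0 C"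
  using assms unfolding unital_def S0_def by blast

lemma identity_in_S0_block:
  assumes cat: "is_category C" and part: "partition_on (Mor C) S" and x: "x \<in> Ob C"
  obtains \<alpha> where "\<alpha> \<in> S0 C S" "Id C x \<in> \<alpha>"
proof -
  have "Id C x \<in> Mor C" using cat x unfolding is_category_def by blast
  then obtain \<alpha> where "\<alpha> \<in> S" "Id C x \<in> \<alpha>"
    using part unfolding partition_on_def by blast
  with x show thesis using that unfolding S0_def J0_def by blast
qed

lemma unit_constants_are_indicators:
  assumes cat: "is_category C" and part: "partition_on (Mor C) S"
    and unital: "unital C S" and \<sigma>: "\<sigma> \<in> S"
  obtains f where "Dom C f \<in> Ob C" "Cod C f \<in> Ob C"
    and "\<forall>\<gamma>\<in>S0 C S. pconst C \<sigma> \<gamma> \<sigma> = (if Id C (Dom C f) \<in> \<gamma> then 1 else 0)"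
    and "\<forall>\<gamma>\<in>S0 C S. pconst C \<gamma> \<sigma> \<sigma> = (if Id C (Cod C f) \<in> \<gamma> then 1 else 0)"
proof
  define f where "f = (SOME f. f \<in> \<sigma>)"
  have \<sigma>_mor: "\<sigma> \<subseteq> Mor C" and "\<sigma> \<noteq> {}"
    using part \<sigma> unfolding partition_on_def by auto
  then have f: "f \<in> \<sigma>" unfolding f_def by (simp add: some_in_eq)
  then show "Dom C f \<in> Ob C" "Cod C f \<in> Ob C"
    using \<sigma>_mor cat unfolding is_category_def by auto
  show "\<forall>\<gamma>\<in>S0 C S. pconst C \<sigma> \<gamma> \<sigma> = (if Id C (Dom C f) \<in> \<gamma> then 1 else 0)"
  proof
    fix \<gamma> assume "\<gamma> \<in> S0 C S"
    show "pconst C \<sigma> \<gamma> \<sigma> = (if Id C (Dom C f) \<in> \<gamma> then 1 else 0)"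
      unfolding f_def
      by (rule pconst_indicator, fold f_def,
          rule pset_identities_right[OF cat S0_identities[OF unital \<open>\<gamma> \<in> S0 C S\<close>] \<sigma>_mor f])
  qed
  show "\<forall>\<gamma>\<in>S0 C S. pconst C \<gamma> \<sigma> \<sigma> = (if Id C (Cod C f) \<in> \<gamma> then 1 else 0)"
  proof
    fix \<gamma> assume "\<gamma> \<in> S0 C S"
    show "pconst C \<gamma> \<sigma> \<sigma> = (if Id C (Cod C f) \<in> \<gamma> then 1 else 0)"
      unfolding f_def
      by (rule pconst_indicator, fold f_def,
          rule pset_identities_left[OF cat S0_identities[OF unital \<open>\<gamma> \<in> S0 C S\<close>] \<sigma>_mor f])
  qed
qed

theorem lemma4p2:
  fixes C :: "('o, 'm) cat" and S :: "'m set set"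
    and To :: "'o \<Rightarrow> 'o" and Tm :: "'m \<Rightarrow> 'm"
  assumes "association_schemoid C S To Tm"
    and "unital C S"
  shows "(\<forall>\<sigma>\<in>S.
           (\<exists>!\<alpha>. \<alpha> \<in> S0 C S \<and> pconst C \<sigma> \<alpha> \<sigma> = 1) \<and>
           (\<forall>\<alpha>\<in>S0 C S. pconst C \<sigma> \<alpha> \<sigma> = 1 \<longrightarrow>
              (\<forall>\<alpha>'\<in>S0 C S. \<alpha>' \<noteq> \<alpha> \<longrightarrow> pconst C \<sigma> \<alpha>' \<sigma> = 0))) \<and>
         (\<forall>\<sigma>\<in>S.
           (\<exists>!\<beta>. \<beta> \<in> S0 C S \<and> pconst C \<beta> \<sigma> \<sigma> = 1) \<and>
           (\<forall>\<beta>\<in>S0 C S. pconst C \<beta> \<sigma> \<sigma> = 1 \<longrightarrow>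
              (\<forall>\<beta>'\<in>S0 C S. \<beta>' \<noteq> \<beta> \<longrightarrow> pconst C \<beta>' \<sigma> \<sigma> = 0)))"
proof -
  have cat: "is_category C" and part: "partition_on (Mor C) S"
    using assms(1) unfolding association_schemoid_def quasi_schemoid_def by auto
  have S0_sub: "S0 C S \<subseteq> S" unfolding S0_def by blast
  have both_sides:
    "((\<exists>!\<alpha>. \<alpha> \<in> S0 C S \<and> pconst C \<sigma> \<alpha> \<sigma> = 1) \<and>
      (\<forall>\<alpha>\<in>S0 C S. pconst C \<sigma> \<alpha> \<sigma> = 1 \<longrightarrow> (\<forall>\<alpha>'\<in>S0 C S. \<alpha>' \<noteq> \<alpha> \<longrightarrow> pconst C \<sigma> \<alpha>' \<sigma> = 0)))
     \<and> ((\<exists>!\<beta>. \<beta> \<in> S0 C S \<and> pconst C \<beta> \<sigma> \<sigma> = 1) \<and>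
      (\<forall>\<beta>\<in>S0 C S. pconst C \<beta> \<sigma> \<sigma> = 1 \<longrightarrow> (\<forall>\<beta>'\<in>S0 C S. \<beta>' \<noteq> \<beta> \<longrightarrow> pconst C \<beta>' \<sigma> \<sigma> = 0)))"
    if \<sigma>: "\<sigma> \<in> S" for \<sigma>
  proof -
    obtain f where ends: "Dom C f \<in> Ob C" "Cod C f \<in> Ob C"
      and right: "\<forall>\<gamma>\<in>S0 C S. pconst C \<sigma> \<gamma> \<sigma> = (if Id C (Dom C f) \<in> \<gamma> then 1 else 0)"
      and left: "\<forall>\<gamma>\<in>S0 C S. pconst C \<gamma> \<sigma> \<sigma> = (if Id C (Cod C f) \<in> \<gamma> then 1 else 0)"
      using unit_constants_are_indicators[OF cat part assms(2) \<sigma>] .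
    obtain \<alpha> where \<alpha>: "\<alpha> \<in> S0 C S" "Id C (Dom C f) \<in> \<alpha>"
      using identity_in_S0_block[OF cat part ends(1)] .
    obtain \<beta> where \<beta>: "\<beta> \<in> S0 C S" "Id C (Cod C f) \<in> \<beta>"
      using identity_in_S0_block[OF cat part ends(2)] .
    show ?thesis
      using indicator_on_partition[OF part S0_sub \<alpha> right]
        indicator_on_partition[OF part S0_sub \<beta> left] by (rule conjI)
  qed
  show ?thesis
    by (rule conjI; rule ballI; drule both_sides; erule conjunct1 conjunct2)
qed

end
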